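(* Let $q>n$ and let $\Theta$ be positively homogeneous of degree $-q$, positive, and $C^1$ on $C\setminus\{o\}$. Let $\mathbb{A}$ be a $C$-asymptotic set and $z\in C\setminus\{o\}$. Then $t\mapsto T_\Theta(\mathbb{A},tz)$ is differentiable on $(0,\infty)$ and for every $t>0$ $$t^{q+1-n}\frac{d}{dt}T_\Theta(\mathbb{A},tz)=(n-q)(\boldsymbol{\chi}_{-C}\ast\Theta)(z)-\int_{z+\frac{1}{t}\mathbb{A}}\langle\nabla\Theta(x),z\rangle\,d\mathcal{H}^n(x).$$ In particular $\frac{d}{dt}\big|_{t=1}T_\Theta(\mathbb{A},tz)=(n-q)(\boldsymbol{\chi}_{-C}\ast\Theta)(z)-\int_{z+\mathbb{A}}\langle\nabla\Theta(x),z\rangle\,d\mathcal{H}^n(x)$.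
   Context: $C\subset\mathbb{R}^n$ ($n\ge2$) is a pointed closed convex cone with nonempty interior. A $C$-asymptotic set is an unbounded closed convex set $\mathbb{A}\subset C$ with nonempty interior and $o\notin\mathbb{A}$ such that $\lim_{x\in\partial\mathbb{A},|x|\to\infty}d(x,\partial C)=0$. $T_\Theta(\mathbb{A},z)=\int_{(z+C)\setminus(z+\mathbb{A})}\Theta\,d\mathcal{H}^n$. $(\boldsymbol{\chi}_{-C}\ast\Theta)(z)=\int_{\mathbb{R}^n}\boldsymbol{\chi}_{-C}(z-x)\Theta(x)\,dx=\int_{z+C}\Theta(x)\,dx$, with $\boldsymbol{\chi}_{-C}$ the indicator of $-C$. "$C^1$ on $C\setminus\{o\}$" means $\Theta$ is the restriction of a $C^1$ function on an open set containing $C\setminus\{o\}$. *)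

theory Defs
  imports "HOL-Analysis.Analysis"
begin

definition pointed_cone :: "'a::euclidean_space set \<Rightarrow> bool" where
  "pointed_cone C \<longleftrightarrow> cone C \<and> convex C \<and> closed C \<and> interior C \<noteq> {} \<and>
     C \<inter> uminus ` C = {0}"

definition C_asymptotic :: "'a::euclidean_space set \<Rightarrow> 'a set \<Rightarrow> bool" where
  "C_asymptotic C A \<longleftrightarrow> A \<subseteq> C \<and> closed A \<and> convex A \<and> \<not> bounded A \<and>
     interior A \<noteq> {} \<and> 0 \<notin> A \<and>
     (\<forall>e>0. \<exists>R. \<forall>x\<in>frontier A. norm x > R \<longrightarrow> infdist x (frontier C) < e)"

text \<open>T_Theta(A,z) = integral of Theta over (z+C) minus (z+A) w.r.t. Lebesgue measure
  (= H^n on R^n).\<close>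
definition T_Theta :: "'a::euclidean_space set \<Rightarrow> ('a \<Rightarrow> real) \<Rightarrow> 'a set \<Rightarrow> 'a \<Rightarrow> real" where
  "T_Theta C \<Theta> A z = integral (((+) z ` C) - ((+) z ` A)) \<Theta>"

definition chi_conv :: "'a::euclidean_space set \<Rightarrow> ('a \<Rightarrow> real) \<Rightarrow> 'a \<Rightarrow> real" where
  "chi_conv C \<Theta> z = integral UNIV (\<lambda>x. indicator (uminus ` C) (z - x) * \<Theta> x)"

end

theory Submission
  imports Defs
begin

(* Write T(A, s z) as the integral of Theta over s z + C minus the integral over s z + A.
   Since s z + C = s (z + C), homogeneity of degree -q turns the first term into
   s^(n-q) (chi_{-C} * Theta)(z); the second is the integral over A of Theta(s z + a).
   On a pointed cone |s z + a| is comparable to s |z| + |a|, so the bound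
   |grad Theta(x)| <= M |x|^(-q-1), which follows from homogeneity, dominates the s-derivative
   uniformly for s near t, and we may differentiate under the integral sign. Finally the
   substitution a = t (x - z) and the (-q-1)-homogeneity of grad Theta rewrite the integral of
   <grad Theta(t z + a), z> over A as t^(n-q-1) times the integral of <grad Theta, z> over z + A/t. *)

lemma set_integrable_affine_image:
  fixes f :: "'a::euclidean_space \<Rightarrow> 'b::euclidean_space"
  assumes m: "m \<noteq> 0" and int: "set_integrable lborel ((\<lambda>x. c + m *\<^sub>R x) ` S) f"
  shows "set_integrable lborel S (\<lambda>x. f (c + m *\<^sub>R x))"
    and "integral ((\<lambda>x. c + m *\<^sub>R x) ` S) f = \<bar>m\<bar> ^ DIM('a) *\<^sub>R integral S (\<lambda>x. f (c + m *\<^sub>R x))"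
proof -
  define T where "T = (\<lambda>x::'a. c + m *\<^sub>R x)"
  define F where "F = (\<lambda>y. indicator (T ` S) y *\<^sub>R f y)"
  have T[measurable]: "T \<in> borel_measurable borel" by (simp add: T_def)
  have "integrable lborel F" using int by (simp add: set_integrable_def F_def T_def)
  then have F[measurable]: "F \<in> borel_measurable borel" by (simp add: borel_measurable_integrable)
  have pull: "F (T x) = indicator S x *\<^sub>R f (T x)" for x
    using m by (auto simp: F_def T_def indicator_def)
  have lborel_eq: "lborel = density (distr lborel borel T) (\<lambda>_. \<bar>m\<bar> ^ DIM('a))"
    unfolding T_def by (rule lborel_affine[OF m])
  have "integrable (distr lborel borel T) (\<lambda>y. \<bar>m\<bar> ^ DIM('a) *\<^sub>R F y)"
    using \<open>integrable lborel F\<close> by (subst (asm) lborel_eq) (simp add: integrable_density)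
  then have "integrable lborel (\<lambda>x. \<bar>m\<bar> ^ DIM('a) *\<^sub>R F (T x))"
    by (subst (asm) integrable_distr_eq) auto
  then have "integrable lborel (\<lambda>x. inverse (\<bar>m\<bar> ^ DIM('a)) *\<^sub>R (\<bar>m\<bar> ^ DIM('a) *\<^sub>R F (T x)))"
    by (rule integrable_scaleR_right)
  then have "integrable lborel (\<lambda>x. indicator S x *\<^sub>R f (T x))"
    using m by (simp only: scaleR_scaleR[of "inverse _"]) (simp add: pull)
  then show int_S: "set_integrable lborel S (\<lambda>x. f (c + m *\<^sub>R x))"
    by (simp add: set_integrable_def T_def)
  have "integral\<^sup>L lborel F = integral\<^sup>L (distr lborel borel T) (\<lambda>y. \<bar>m\<bar> ^ DIM('a) *\<^sub>R F y)"
    by (subst lborel_eq) (simp add: integral_density)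
  also have "\<dots> = \<bar>m\<bar> ^ DIM('a) *\<^sub>R (LINT x:S|lborel. f (T x))"
    by (simp add: integral_distr pull set_lebesgue_integral_def)
  finally show "integral ((\<lambda>x. c + m *\<^sub>R x) ` S) f = \<bar>m\<bar> ^ DIM('a) *\<^sub>R integral S (\<lambda>x. f (c + m *\<^sub>R x))"
    using set_borel_integral_eq_integral(2)[OF int] set_borel_integral_eq_integral(2)[OF int_S]
    by (simp add: set_lebesgue_integral_def F_def T_def)
qed

lemma nn_integral_shifted_abs_powr_finite:
  fixes r \<alpha> :: real
  assumes r: "r > 1" and \<alpha>: "\<alpha> > 0"
  shows "(\<integral>\<^sup>+u. ennreal ((\<alpha> + \<bar>u\<bar>) powr (-r)) \<partial>lborel) < \<infinity>"
proof -
  define g where "g = (\<lambda>x::real. ennreal (x powr (-r)) * indicator {\<alpha>..} x)"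
  have g[measurable]: "g \<in> borel_measurable borel" by (simp add: g_def)
  have "(\<integral>\<^sup>+x. g x \<partial>lborel) = ennreal (- (\<alpha> powr (-r + 1)) / (-r + 1))"
    unfolding g_def using \<alpha> r by (intro nn_integral_has_integral_lebesgue' has_integral_powr_to_inf) auto
  then have g_fin: "(\<integral>\<^sup>+x. g x \<partial>lborel) < \<infinity>" by simp
  have "(\<integral>\<^sup>+u. ennreal ((\<alpha> + \<bar>u\<bar>) powr (-r)) \<partial>lborel) \<le> (\<integral>\<^sup>+u. g (\<alpha> + 1 * u) + g (\<alpha> + -1 * u) \<partial>lborel)"
    using \<alpha> by (intro nn_integral_mono) (auto simp: g_def indicator_def abs_if)
  also have "\<dots> = (\<integral>\<^sup>+u. g (\<alpha> + 1 * u) \<partial>lborel) + (\<integral>\<^sup>+u. g (\<alpha> + -1 * u) \<partial>lborel)"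
    by (rule nn_integral_add) auto
  also have "\<dots> = 2 * (\<integral>\<^sup>+x. g x \<partial>lborel)"
    using nn_integral_real_affine[OF g, of 1 \<alpha>] nn_integral_real_affine[OF g, of "-1" \<alpha>]
    by (simp add: mult_2)
  also have "\<dots> < \<infinity>" using g_fin by (simp add: ennreal_mult_less_top)
  finally show ?thesis .
qed

lemma integrable_shifted_norm_powr:
  fixes p \<alpha> :: real
  assumes p: "p > real DIM('a)" and \<alpha>: "\<alpha> > 0"
  shows "integrable lborel (\<lambda>x::'a::euclidean_space. (\<alpha> + norm x) powr (-p))"
proof (rule integrableI_bounded)
  define r where "r = p / real DIM('a)"
  have r: "r > 1" using p by (simp add: r_def field_simps)
  \<comment> \<open>Since each coordinate is bounded by the norm, the radial weight is dominated by a product of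
    one-dimensional weights with exponent p/n > 1.\<close>
  have pointwise: "ennreal (norm ((\<alpha> + norm x) powr (-p))) \<le> (\<Prod>b\<in>Basis. ennreal ((\<alpha> + \<bar>x \<bullet> b\<bar>) powr (-r)))"
    for x :: 'a
  proof -
    have "\<alpha> + norm x > 0" using \<alpha> by (simp add: add_pos_nonneg)
    then have "(\<alpha> + norm x) powr (-r) > 0" by simp
    then have "(\<Prod>b\<in>(Basis::'a set). (\<alpha> + norm x) powr (-r)) = ((\<alpha> + norm x) powr (-r)) powr DIM('a)"
      by (simp add: powr_realpow)
    then have "(\<alpha> + norm x) powr (-p) = (\<Prod>b\<in>(Basis::'a set). (\<alpha> + norm x) powr (-r))"
      by (simp add: powr_powr r_def)
    also have "\<dots> \<le> (\<Prod>b\<in>Basis. (\<alpha> + \<bar>x \<bullet> b\<bar>) powr (-r))"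
      using \<alpha> r Basis_le_norm by (intro prod_mono conjI powr_mono2') auto
    finally show ?thesis by (simp add: prod_ennreal ennreal_leI)
  qed
  have "(\<integral>\<^sup>+x. ennreal (norm ((\<alpha> + norm (x::'a)) powr (-p))) \<partial>lborel)
      \<le> (\<integral>\<^sup>+x. (\<Prod>b\<in>Basis. ennreal ((\<alpha> + \<bar>(x::'a) \<bullet> b\<bar>) powr (-r))) \<partial>lborel)"
    by (intro nn_integral_mono pointwise)
  also have "\<dots> = (\<Prod>b\<in>(Basis::'a set). (\<integral>\<^sup>+u. ennreal ((\<alpha> + \<bar>u\<bar>) powr (-r)) \<partial>lborel))"
    by (rule nn_integral_lborel_prod[where f="\<lambda>b u. ennreal ((\<alpha> + \<bar>u\<bar>) powr (-r))"]) auto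
  also have "\<dots> < \<infinity>"
    using nn_integral_shifted_abs_powr_finite[OF r \<alpha>] by (simp add: power_less_top_ennreal)
  finally show "(\<integral>\<^sup>+x. ennreal (norm ((\<alpha> + norm (x::'a)) powr (-p))) \<partial>lborel) < \<infinity>" .
qed measurable

lemma has_real_derivative_integral_dominated:
  fixes f f' :: "real \<Rightarrow> 'a::euclidean_space \<Rightarrow> real"
  assumes t: "t \<in> {a<..<b}"
    and f_int: "\<And>s. s \<in> {a<..<b} \<Longrightarrow> f s integrable_on S"
    and f_deriv: "\<And>s x. s \<in> {a<..<b} \<Longrightarrow> x \<in> S \<Longrightarrow> ((\<lambda>s. f s x) has_real_derivative f' s x) (at s)"
    and dominated: "\<And>s x. s \<in> {a<..<b} \<Longrightarrow> x \<in> S \<Longrightarrow> \<bar>f' s x\<bar> \<le> g x"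
    and g_int: "g integrable_on S"
  shows "((\<lambda>s. integral S (f s)) has_real_derivative integral S (f' t)) (at t)"
proof -
  let ?I = "{a<..<b}"
  define Q where "Q = (\<lambda>s x. (f s x - f t x) / (s - t))"
  have Q_bound: "\<bar>Q s x\<bar> \<le> g x" if s: "s \<in> ?I" "s \<noteq> t" and x: "x \<in> S" for s x
  proof -
    have "norm (f s x - f t x) \<le> g x * norm (s - t)"
      using t s x f_deriv dominated
      by (intro field_differentiable_bound[of ?I "\<lambda>s. f s x" "\<lambda>s. f' s x"])
         (auto intro: has_field_derivative_at_within)
    then show ?thesis using s by (simp add: Q_def abs_divide divide_le_eq)
  qed
  have "((\<lambda>s. (integral S (f s) - integral S (f t)) / (s - t)) \<longlongrightarrow> integral S (f' t)) (at t within ?I)"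
  proof (unfold tendsto_at_iff_sequentially, intro allI impI)
    fix X :: "nat \<Rightarrow> real" assume X: "\<forall>k. X k \<in> ?I - {t}" "X \<longlonglongrightarrow> t"
    have "(\<lambda>k. integral S (Q (X k))) \<longlonglongrightarrow> integral S (f' t)"
    proof (rule dominated_convergence(2)[OF _ g_int])
      show "Q (X k) integrable_on S" for k
        using X(1) t by (auto simp: Q_def intro!: integrable_on_divide integrable_diff f_int)
      show "norm (Q (X k) x) \<le> g x" if "x \<in> S" for k x
        using X(1) Q_bound that by auto
      show "(\<lambda>k. Q (X k) x) \<longlonglongrightarrow> f' t x" if "x \<in> S" for x
      proof -
        have "((\<lambda>s. Q s x) \<longlongrightarrow> f' t x) (at t)"
          using f_deriv[OF t that] by (simp add: Q_def has_field_derivative_iff)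
        then show ?thesis
          using X by (auto simp: tendsto_at_iff_sequentially o_def)
      qed
    qed
    moreover have "integral S (Q (X k)) = (integral S (f (X k)) - integral S (f t)) / (X k - t)" for k
      using X(1) t by (simp add: Q_def f_int integral_diff integral_divide)
    ultimately show "((\<lambda>s. (integral S (f s) - integral S (f t)) / (s - t)) \<circ> X) \<longlonglongrightarrow> integral S (f' t)"
      by (simp add: o_def)
  qed
  then show ?thesis
    using at_within_open[of t ?I] t by (simp add: has_field_derivative_iff)
qed

lemma convex_cone_sum:
  assumes "convex_cone C" "\<And>x. x \<in> S \<Longrightarrow> f x \<in> C"
  shows "sum f S \<in> C"
proof (cases "finite S")
  case True
  then show ?thesis using assms(2)
    by (induction S rule: finite_induct) (auto intro: convex_cone_add[OF assms(1)] convex_cone_contains_0[OF assms(1)])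
qed (simp add: convex_cone_contains_0[OF assms(1)])

lemma pointed_cone_imp_convex_cone: "pointed_cone C \<Longrightarrow> convex_cone C"
  unfolding pointed_cone_def convex_cone_def conic_def cone_def by blast

lemma pointed_cone_strictly_positive_functional:
  fixes C :: "'a::euclidean_space set"
  assumes C: "pointed_cone C"
  obtains l c where "c > 0" "\<And>x. x \<in> C \<Longrightarrow> c * norm x \<le> l \<bullet> x"
proof -
  have cC: "convex_cone C" "closed C" and pointed: "C \<inter> uminus ` C = {0}"
    using C pointed_cone_imp_convex_cone unfolding pointed_cone_def by blast+
  let ?K = "convex hull (C \<inter> sphere 0 1)"
  have "compact ?K"
    using cC(2) by (intro compact_convex_hull closed_Int_compact) auto
  \<comment> \<open>A convex combination of unit vectors of C vanishing would exhibit a nonzero element of C \<inter> -C.\<close>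
  have "0 \<notin> ?K"
  proof
    assume "0 \<in> ?K"
    then obtain S u where S: "finite S" "S \<subseteq> C \<inter> sphere 0 1" "\<forall>x\<in>S. 0 \<le> u x" "sum u S = 1"
      "(\<Sum>v\<in>S. u v *\<^sub>R v) = 0"
      unfolding convex_hull_explicit by blast
    obtain i where "i \<in> S" "u i \<noteq> 0"
      using S(4) sum.not_neutral_contains_not_neutral[of u S] by auto
    then have i: "i \<in> S" "u i > 0" using S(3) by force+
    have "u i *\<^sub>R i = - (\<Sum>v\<in>S - {i}. u v *\<^sub>R v)"
      using S(1,5) i(1) by (simp add: sum.remove eq_neg_iff_add_eq_0)
    moreover have "(\<Sum>v\<in>S - {i}. u v *\<^sub>R v) \<in> C"
      using S(2,3) by (intro convex_cone_sum[OF cC(1)] convex_cone_scaleR[OF cC(1)]) auto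
    ultimately have "u i *\<^sub>R i \<in> uminus ` C" by (rule image_eqI)
    moreover have "u i *\<^sub>R i \<in> C"
      using S(2) i by (intro convex_cone_scaleR[OF cC(1)]) auto
    ultimately have "u i *\<^sub>R i = 0" using pointed by blast
    then show False using i S(2) by auto
  qed
  then obtain l b where b: "0 < b" "\<And>x. x \<in> ?K \<Longrightarrow> b < l \<bullet> x"
    using separating_hyperplane_closed_0[OF convex_convex_hull compact_imp_closed[OF \<open>compact ?K\<close>]] by blast
  have "b * norm x \<le> l \<bullet> x" if "x \<in> C" for x
  proof (cases "x = 0")
    case False
    then have "(1 / norm x) *\<^sub>R x \<in> C \<inter> sphere 0 1"
      using that convex_cone_scaleR[OF cC(1)] by auto
    then have "(1 / norm x) *\<^sub>R x \<in> ?K" by (rule hull_inc)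
    then have "b < l \<bullet> ((1 / norm x) *\<^sub>R x)" by (rule b(2))
    then have "b < (l \<bullet> x) / norm x" by (simp add: divide_inverse_commute)
    then show ?thesis using False by (simp add: pos_less_divide_eq less_imp_le)
  qed simp
  with b(1) show ?thesis using that by blast
qed

lemma pointed_cone_norm_add_ge:
  fixes C :: "'a::euclidean_space set"
  assumes "pointed_cone C"
  obtains \<kappa> where "\<kappa> > 0" "\<And>x y. x \<in> C \<Longrightarrow> y \<in> C \<Longrightarrow> \<kappa> * (norm x + norm y) \<le> norm (x + y)"
proof -
  obtain l c where c: "c > 0" and l: "\<And>x. x \<in> C \<Longrightarrow> c * norm x \<le> l \<bullet> x"
    using pointed_cone_strictly_positive_functional[OF assms] by blast
  have "c / (norm l + 1) * (norm x + norm y) \<le> norm (x + y)" if "x \<in> C" "y \<in> C" for x y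
  proof -
    have "c * (norm x + norm y) \<le> l \<bullet> (x + y)"
      using l[OF that(1)] l[OF that(2)] by (simp add: inner_add_right distrib_left)
    also have "\<dots> \<le> norm l * norm (x + y)" by (rule norm_cauchy_schwarz)
    also have "\<dots> \<le> (norm l + 1) * norm (x + y)" by (simp add: distrib_right)
    finally show ?thesis by (simp add: field_simps add_pos_nonneg)
  qed
  moreover have "c / (norm l + 1) > 0" using c by (intro divide_pos_pos add_nonneg_pos) auto
  ultimately show ?thesis using that by blast
qed

lemma pointed_cone_translate_subset:
  assumes C: "pointed_cone C" and w: "w \<in> C - {0}"
  shows "(+) w ` C \<subseteq> C - {0}"
proof
  fix x assume "x \<in> (+) w ` C"
  then obtain a where a: "a \<in> C" "x = w + a" by blast
  obtain \<kappa> where "\<kappa> > 0" "\<kappa> * (norm w + norm a) \<le> norm x"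
    using pointed_cone_norm_add_ge[OF C] w a by (metis DiffD1)
  moreover have "norm w + norm a > 0" using w by (simp add: add_pos_nonneg)
  ultimately have "x \<noteq> 0" by (metis mult_pos_pos norm_zero not_le)
  then show "x \<in> C - {0}"
    using a w convex_cone_add[OF pointed_cone_imp_convex_cone[OF C]] by auto
qed

lemma pointed_cone_zero_notin_interior:
  assumes "pointed_cone C"
  shows "0 \<notin> interior C"
proof
  assume "0 \<in> interior C"
  then obtain e where e: "e > 0" "ball 0 e \<subseteq> C"
    using interior_subset open_contains_ball_eq open_interior by (metis subset_trans)
  obtain v :: 'a where v: "norm v = e / 2"
    using vector_choose_size[of "e / 2"] e(1) by auto
  then have "v \<in> C" "- v \<in> C" using e by (auto intro!: subsetD[OF e(2)])
  then have "v \<in> C \<inter> uminus ` C" by (metis IntI image_eqI minus_minus)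
  then have "v = 0" using assms unfolding pointed_cone_def by blast
  then show False using v e(1) by simp
qed

lemma homogeneous_norm_bound:
  fixes f :: "'a::euclidean_space \<Rightarrow> 'b::real_normed_vector"
  assumes C: "closed C" "cone C" and f: "continuous_on (C - {0}) f"
    and homog: "\<And>x t. x \<in> C - {0} \<Longrightarrow> t > 0 \<Longrightarrow> f (t *\<^sub>R x) = t powr r *\<^sub>R f x"
  obtains M where "M \<ge> 0" "\<And>x. x \<in> C - {0} \<Longrightarrow> norm (f x) \<le> M * norm x powr r"
proof -
  have "compact (f ` (C \<inter> sphere 0 1))"
    using C(1) by (intro compact_continuous_image continuous_on_subset[OF f] closed_Int_compact) auto
  then obtain B where "\<forall>v \<in> f ` (C \<inter> sphere 0 1). norm v \<le> B"
    using compact_imp_bounded bounded_iff by blast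
  then have B: "\<And>y. y \<in> C \<inter> sphere 0 1 \<Longrightarrow> norm (f y) \<le> B" by blast
  have "norm (f x) \<le> max B 0 * norm x powr r" if x: "x \<in> C - {0}" for x
  proof -
    define y where "y = (1 / norm x) *\<^sub>R x"
    have "y \<in> C" using x C(2) by (simp add: y_def cone_def)
    moreover have "norm y = 1" using x by (simp add: y_def)
    ultimately have y: "y \<in> C - {0}" "y \<in> C \<inter> sphere 0 1" by auto
    have "f x = norm x powr r *\<^sub>R f y"
      using homog[OF y(1), of "norm x"] x by (simp add: y_def)
    then have "norm (f x) = norm (f y) * norm x powr r" by simp
    also have "\<dots> \<le> max B 0 * norm x powr r"
      using B[OF y(2)] by (intro mult_right_mono) auto
    finally show ?thesis .
  qed
  then show ?thesis using that[of "max B 0"] by simp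
qed

lemma homogeneous_gradient:
  fixes f :: "'a::real_inner \<Rightarrow> real" and g :: "'a \<Rightarrow> 'a"
  assumes V: "open V" "x \<in> V" and t: "t > 0"
    and homog: "\<And>y. y \<in> V \<Longrightarrow> f (t *\<^sub>R y) = t powr r * f y"
    and f_x: "(f has_derivative (\<lambda>h. g x \<bullet> h)) (at x)"
    and f_tx: "(f has_derivative (\<lambda>h. g (t *\<^sub>R x) \<bullet> h)) (at (t *\<^sub>R x))"
  shows "g (t *\<^sub>R x) = t powr (r - 1) *\<^sub>R g x"
proof -
  have "((\<lambda>y. f (t *\<^sub>R y)) has_derivative (\<lambda>h. g (t *\<^sub>R x) \<bullet> (t *\<^sub>R h))) (at x)"
    using has_derivative_compose[OF has_derivative_scaleR_right[OF has_derivative_ident, of t] f_tx]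
    by (simp add: o_def)
  then have "((\<lambda>y. t powr r * f y) has_derivative (\<lambda>h. g (t *\<^sub>R x) \<bullet> (t *\<^sub>R h))) (at x)"
    by (rule has_derivative_transform_within_open[OF _ V]) (simp add: homog)
  moreover have "((\<lambda>y. t powr r * f y) has_derivative (\<lambda>h. t powr r * (g x \<bullet> h))) (at x)"
    using f_x by (rule has_derivative_mult_right)
  ultimately have "(\<lambda>h. g (t *\<^sub>R x) \<bullet> (t *\<^sub>R h)) = (\<lambda>h. t powr r * (g x \<bullet> h))"
    by (rule has_derivative_unique)
  then have "\<forall>h. (t *\<^sub>R g (t *\<^sub>R x)) \<bullet> h = (t powr r *\<^sub>R g x) \<bullet> h"
    by (simp add: fun_eq_iff)
  then have scaled: "t *\<^sub>R g (t *\<^sub>R x) = t powr r *\<^sub>R g x"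
    by (simp only: vector_eq_rdot)
  have "g (t *\<^sub>R x) = (1 / t) *\<^sub>R (t *\<^sub>R g (t *\<^sub>R x))" using t by simp
  also have "\<dots> = (t powr r / t) *\<^sub>R g x" by (simp add: scaled)
  also have "t powr r / t = t powr (r - 1)" using t by (simp add: powr_diff)
  finally show ?thesis .
qed

lemma set_integrable_translated_pointed_cone:
  fixes f :: "'a::euclidean_space \<Rightarrow> real"
  assumes C: "pointed_cone C" and w: "w \<in> C - {0}" and S: "closed S" "S \<subseteq> (+) w ` C"
    and f: "continuous_on S f" and p: "p > real DIM('a)" and K: "K \<ge> 0"
    and bound: "\<And>x. x \<in> S \<Longrightarrow> \<bar>f x\<bar> \<le> K * norm x powr (-p)"
  shows "set_integrable lborel S f"
proof -
  obtain \<kappa> where \<kappa>: "\<kappa> > 0" "\<And>x y. x \<in> C \<Longrightarrow> y \<in> C \<Longrightarrow> \<kappa> * (norm x + norm y) \<le> norm (x + y)"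
    using pointed_cone_norm_add_ge[OF C] by blast
  define G where "G = (\<lambda>x::'a. K * (\<kappa> / 2) powr (-p) * (norm w + norm x) powr (-p))"
  have G_nonneg: "G x \<ge> 0" for x using K by (simp add: G_def)
  have G_int: "integrable lborel G"
    using integrable_shifted_norm_powr[OF p, of "norm w"] w by (simp add: G_def)
  have measurable: "(\<lambda>x. indicator S x *\<^sub>R f x) \<in> borel_measurable lborel"
    using borel_measurable_continuous_on_indicator[OF _ f] S(1) by simp
  have dominated: "norm (indicator S x *\<^sub>R f x) \<le> norm (G x)" for x
  proof (cases "x \<in> S")
    case True
    then have "x \<in> (+) w ` C" using S(2) by (rule subsetD[rotated])
    then obtain a where a: "a \<in> C" "x = w + a" by blast
    have "norm x \<le> norm w + norm a" using norm_triangle_ineq[of w a] a(2) by simp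
    then have "norm w + norm x \<le> 2 * (norm w + norm a)"
      unfolding mult_2 using norm_ge_zero[of a] by linarith
    then have "\<kappa> / 2 * (norm w + norm x) \<le> \<kappa> / 2 * (2 * (norm w + norm a))"
      using \<kappa>(1) by (intro mult_left_mono) auto
    also have "\<dots> = \<kappa> * (norm w + norm a)" by simp
    also have "\<dots> \<le> norm x" using \<kappa>(2)[of w a] w a by simp
    finally have lower: "\<kappa> / 2 * (norm w + norm x) \<le> norm x" .
    have "0 < \<kappa> / 2 * (norm w + norm x)" using \<kappa>(1) w by (simp add: add_pos_nonneg)
    then have "norm x powr (-p) \<le> (\<kappa> / 2 * (norm w + norm x)) powr (-p)"
      using p lower by (intro powr_mono2') auto
    then have "K * norm x powr (-p) \<le> K * (\<kappa> / 2 * (norm w + norm x)) powr (-p)"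
      using K by (rule mult_left_mono)
    with bound[OF True] have "\<bar>f x\<bar> \<le> K * (\<kappa> / 2 * (norm w + norm x)) powr (-p)"
      by (rule order_trans)
    also have "\<dots> = G x"
      unfolding G_def using \<kappa>(1) by (subst powr_mult) (auto simp: mult.assoc)
    finally show ?thesis using True G_nonneg by simp
  qed (simp add: G_nonneg)
  show ?thesis
    unfolding set_integrable_def
    by (rule Bochner_Integration.integrable_bound[OF G_int measurable AE_I2[OF dominated]])
qed

lemma chi_conv_eq_integral: "chi_conv C \<Theta> z = integral ((+) z ` C) \<Theta>"
proof -
  have "z - x \<in> uminus ` C \<longleftrightarrow> x \<in> (+) z ` C" for x
  proof -
    have "z - x \<in> uminus ` C \<longleftrightarrow> - (x - z) \<in> uminus ` C" by simp
    also have "\<dots> \<longleftrightarrow> x - z \<in> C" by (rule inj_image_mem_iff[OF inj_uminus])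
    also have "\<dots> \<longleftrightarrow> x \<in> (+) z ` C"
    proof
      assume "x - z \<in> C"
      then show "x \<in> (+) z ` C" by (rule image_eqI[rotated]) simp
    qed auto
    finally show ?thesis .
  qed
  then have "(\<lambda>x. indicator (uminus ` C) (z - x) * \<Theta> x) = (\<lambda>x. if x \<in> (+) z ` C then \<Theta> x else 0)"
    by (simp add: indicator_def fun_eq_iff)
  then show ?thesis by (simp add: chi_conv_def integral_restrict_UNIV)
qed

locale homogeneous_C1_weight =
  fixes C :: "'a::euclidean_space set" and \<Theta> :: "'a \<Rightarrow> real" and grad :: "'a \<Rightarrow> 'a"
    and q :: real and U :: "'a set"
  assumes pointed: "pointed_cone C"
    and q_gt_dim: "q > real DIM('a)"
    and homogeneous: "\<And>x t. x \<in> C - {0} \<Longrightarrow> t > 0 \<Longrightarrow> \<Theta> (t *\<^sub>R x) = t powr (- q) * \<Theta> x"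
    and open_U: "open U" and C_subset_U: "C - {0} \<subseteq> U"
    and continuous_grad: "continuous_on U grad"
    and has_derivative_Theta: "\<And>x. x \<in> U \<Longrightarrow> (\<Theta> has_derivative (\<lambda>h. grad x \<bullet> h)) (at x)"
begin

lemma closed_C: "closed C" and cone_C: "cone C" and convex_C: "convex C"
  and interior_C: "interior C \<noteq> {}"
  using pointed unfolding pointed_cone_def by blast+

lemma translated_cone_subset: "w \<in> C - {0} \<Longrightarrow> (+) w ` C \<subseteq> C - {0}"
  by (rule pointed_cone_translate_subset[OF pointed])

lemma scaleR_punctured_cone: "x \<in> C - {0} \<Longrightarrow> t > 0 \<Longrightarrow> t *\<^sub>R x \<in> C - {0}"
  using cone_C by (simp add: cone_def)

lemma continuous_on_Theta: "continuous_on U \<Theta>"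
  using has_derivative_Theta has_derivative_continuous by (blast intro: continuous_at_imp_continuous_on)

lemma grad_homogeneous:
  assumes x: "x \<in> C - {0}" and t: "t > 0"
  shows "grad (t *\<^sub>R x) = t powr (- q - 1) *\<^sub>R grad x"
proof -
  have interior_sub: "interior C \<subseteq> C - {0}"
    using interior_subset pointed_cone_zero_notin_interior[OF pointed] by blast
  have on_interior: "grad (t *\<^sub>R y) = t powr (- q - 1) *\<^sub>R grad y" if y: "y \<in> interior C" for y
  proof (rule homogeneous_gradient[OF open_interior y t])
    show "\<Theta> (t *\<^sub>R v) = t powr (- q) * \<Theta> v" if "v \<in> interior C" for v
      using homogeneous[OF _ t] interior_sub that by blast
    show "(\<Theta> has_derivative (\<lambda>h. grad y \<bullet> h)) (at y)"
      using y interior_sub C_subset_U by (intro has_derivative_Theta) blast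
    show "(\<Theta> has_derivative (\<lambda>h. grad (t *\<^sub>R y) \<bullet> h)) (at (t *\<^sub>R y))"
      using y interior_sub scaleR_punctured_cone[OF _ t] C_subset_U by (intro has_derivative_Theta) blast
  qed
  \<comment> \<open>Extend from the interior by continuity: a convex body is the closure of its interior.\<close>
  have "x \<in> closure (interior C)"
    using convex_closure_interior[OF convex_C interior_C] closed_C x by (simp add: closure_closed)
  then obtain xs where xs: "\<And>k. xs k \<in> interior C" "xs \<longlonglongrightarrow> x"
    using closure_sequential by blast
  have cont: "isCont grad y" if "y \<in> C - {0}" for y
    using continuous_grad open_U C_subset_U that continuous_on_eq_continuous_at by blast
  have "(\<lambda>k. grad (t *\<^sub>R xs k)) \<longlonglongrightarrow> grad (t *\<^sub>R x)"
    using isCont_tendsto_compose[OF cont[OF scaleR_punctured_cone[OF x t]] tendsto_scaleR[OF tendsto_const xs(2)]] .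
  moreover have "(\<lambda>k. grad (t *\<^sub>R xs k)) \<longlonglongrightarrow> t powr (- q - 1) *\<^sub>R grad x"
    unfolding on_interior[OF xs(1)]
    by (intro tendsto_scaleR tendsto_const isCont_tendsto_compose[OF cont[OF x] xs(2)])
  ultimately show ?thesis using LIMSEQ_unique by blast
qed

lemma Theta_bound:
  obtains M where "M \<ge> 0" "\<And>x. x \<in> C - {0} \<Longrightarrow> \<bar>\<Theta> x\<bar> \<le> M * norm x powr (- q)"
proof (rule homogeneous_norm_bound[OF closed_C cone_C, of \<Theta> "- q"])
  show "continuous_on (C - {0}) \<Theta>"
    by (rule continuous_on_subset[OF continuous_on_Theta C_subset_U])
  show "\<Theta> (t *\<^sub>R x) = t powr (- q) *\<^sub>R \<Theta> x" if "x \<in> C - {0}" "t > 0" for x t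
    using homogeneous[OF that] by simp
next
  fix M assume "M \<ge> 0" "\<And>x. x \<in> C - {0} \<Longrightarrow> norm (\<Theta> x) \<le> M * norm x powr (- q)"
  then show thesis using that by simp
qed

lemma grad_bound:
  obtains M where "M \<ge> 0" "\<And>x. x \<in> C - {0} \<Longrightarrow> norm (grad x) \<le> M * norm x powr (- q - 1)"
proof (rule homogeneous_norm_bound[OF closed_C cone_C, of grad "- q - 1"])
  show "continuous_on (C - {0}) grad"
    by (rule continuous_on_subset[OF continuous_grad C_subset_U])
qed (use grad_homogeneous that in auto)

lemma set_integrable_Theta:
  assumes w: "w \<in> C - {0}" and S: "closed S" "S \<subseteq> (+) w ` C"
  shows "set_integrable lborel S \<Theta>"
proof -
  obtain M where M: "M \<ge> 0" "\<And>x. x \<in> C - {0} \<Longrightarrow> \<bar>\<Theta> x\<bar> \<le> M * norm x powr (- q)"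
    using Theta_bound by blast
  have S_sub: "S \<subseteq> C - {0}" using S(2) translated_cone_subset[OF w] by blast
  show ?thesis
  proof (rule set_integrable_translated_pointed_cone[OF pointed w S _ q_gt_dim M(1)])
    show "continuous_on S \<Theta>"
      using S_sub C_subset_U by (intro continuous_on_subset[OF continuous_on_Theta]) auto
  qed (use M(2) S_sub in auto)
qed

lemma set_integrable_grad_inner:
  assumes w: "w \<in> C - {0}" and S: "closed S" "S \<subseteq> (+) w ` C"
  shows "set_integrable lborel S (\<lambda>x. grad x \<bullet> v)"
proof -
  obtain M where M: "M \<ge> 0" "\<And>x. x \<in> C - {0} \<Longrightarrow> norm (grad x) \<le> M * norm x powr (- q - 1)"
    using grad_bound by blast
  have S_sub: "S \<subseteq> C - {0}" using S(2) translated_cone_subset[OF w] by blast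
  have "\<bar>grad x \<bullet> v\<bar> \<le> (M * norm v) * norm x powr (- q - 1)" if "x \<in> S" for x
  proof -
    have "\<bar>grad x \<bullet> v\<bar> \<le> norm (grad x) * norm v" by (rule Cauchy_Schwarz_ineq2)
    also have "\<dots> \<le> M * norm x powr (- q - 1) * norm v"
      using M(2) that S_sub by (intro mult_right_mono) auto
    finally show ?thesis by (simp add: algebra_simps)
  qed
  moreover have "continuous_on S (\<lambda>x. grad x \<bullet> v)"
    using S_sub C_subset_U by (intro continuous_intros continuous_on_subset[OF continuous_grad]) auto
  ultimately show ?thesis
    using set_integrable_translated_pointed_cone[OF pointed w S, of _ "q + 1" "M * norm v"] q_gt_dim M(1)
    by (simp add: minus_add_distrib[symmetric])
qed

lemma integral_translated_cone_scaled:
  assumes z: "z \<in> C - {0}" and s: "s > 0"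
  shows "integral ((+) (s *\<^sub>R z) ` C) \<Theta> = s powr (real DIM('a) - q) * integral ((+) z ` C) \<Theta>"
proof -
  have "(*\<^sub>R) s ` C = C"
    using cone_C s cone_iff[of C] z by blast
  moreover have "(\<lambda>x. 0 + s *\<^sub>R x) ` ((+) z ` C) = (+) (s *\<^sub>R z) ` ((*\<^sub>R) s ` C)"
    by (simp add: image_image scaleR_add_right)
  ultimately have image: "(+) (s *\<^sub>R z) ` C = (\<lambda>x. 0 + s *\<^sub>R x) ` ((+) z ` C)"
    by simp
  have "set_integrable lborel ((\<lambda>x. 0 + s *\<^sub>R x) ` ((+) z ` C)) \<Theta>"
    unfolding image[symmetric]
    using scaleR_punctured_cone[OF z s] closed_C by (intro set_integrable_Theta closed_translation) auto
  then have "integral ((+) (s *\<^sub>R z) ` C) \<Theta> = s ^ DIM('a) * integral ((+) z ` C) (\<lambda>x. \<Theta> (s *\<^sub>R x))"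
    unfolding image using s by (subst set_integrable_affine_image(2)) auto
  also have "integral ((+) z ` C) (\<lambda>x. \<Theta> (s *\<^sub>R x)) = integral ((+) z ` C) (\<lambda>x. s powr (- q) * \<Theta> x)"
    using translated_cone_subset[OF z] homogeneous[OF _ s] by (intro integral_cong) auto
  also have "s ^ DIM('a) * \<dots> = s powr (real DIM('a) - q) * integral ((+) z ` C) \<Theta>"
    using s by (simp add: powr_realpow[symmetric] powr_diff powr_minus divide_inverse)
  finally show ?thesis .
qed

lemma integral_translated_Theta:
  assumes w: "w \<in> C - {0}" and A: "A \<subseteq> C" "closed A"
  shows "(\<lambda>a. \<Theta> (w + a)) integrable_on A"
    and "integral ((+) w ` A) \<Theta> = integral A (\<lambda>a. \<Theta> (w + a))"
proof -
  have image: "(+) w ` A = (\<lambda>x. w + 1 *\<^sub>R x) ` A" by simp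
  have "set_integrable lborel ((\<lambda>x. w + 1 *\<^sub>R x) ` A) \<Theta>"
    unfolding image[symmetric] using A by (intro set_integrable_Theta[OF w] closed_translation) auto
  from set_integrable_affine_image[OF _ this] show
    "(\<lambda>a. \<Theta> (w + a)) integrable_on A" "integral ((+) w ` A) \<Theta> = integral A (\<lambda>a. \<Theta> (w + a))"
    by (auto dest: set_borel_integral_eq_integral(1))
qed

lemma T_Theta_scaled_eq:
  assumes A: "A \<subseteq> C" "closed A" and z: "z \<in> C - {0}" and s: "s > 0"
  shows "T_Theta C \<Theta> A (s *\<^sub>R z) = s powr (real DIM('a) - q) * chi_conv C \<Theta> z - integral A (\<lambda>a. \<Theta> (s *\<^sub>R z + a))"
proof -
  have sz: "s *\<^sub>R z \<in> C - {0}" by (rule scaleR_punctured_cone[OF z s])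
  have "\<Theta> integrable_on (+) (s *\<^sub>R z) ` C"
    using closed_C by (intro set_borel_integral_eq_integral(1) set_integrable_Theta[OF sz] closed_translation) auto
  moreover have "\<Theta> integrable_on (+) (s *\<^sub>R z) ` A"
    using A by (intro set_borel_integral_eq_integral(1) set_integrable_Theta[OF sz] closed_translation) auto
  ultimately have "T_Theta C \<Theta> A (s *\<^sub>R z) = integral ((+) (s *\<^sub>R z) ` C) \<Theta> - integral ((+) (s *\<^sub>R z) ` A) \<Theta>"
    unfolding T_Theta_def using A by (intro integral_setdiff) auto
  then show ?thesis
    by (simp add: integral_translated_cone_scaled[OF z s] integral_translated_Theta(2)[OF sz A] chi_conv_eq_integral)
qed

lemma Theta_has_real_derivative_along:
  assumes a: "a \<in> C" and z: "z \<in> C - {0}" and s: "s > 0"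
  shows "((\<lambda>s. \<Theta> (s *\<^sub>R z + a)) has_real_derivative grad (s *\<^sub>R z + a) \<bullet> z) (at s)"
proof -
  have U: "s *\<^sub>R z + a \<in> U"
    using translated_cone_subset[OF scaleR_punctured_cone[OF z s]] a C_subset_U by blast
  have line: "((\<lambda>s. s *\<^sub>R z + a) has_derivative (\<lambda>h. h *\<^sub>R z)) (at s)"
    by (auto intro!: derivative_eq_intros)
  have "((\<lambda>s. \<Theta> (s *\<^sub>R z + a)) has_derivative (\<lambda>h. grad (s *\<^sub>R z + a) \<bullet> (h *\<^sub>R z))) (at s)"
    by (rule has_derivative_compose[OF line has_derivative_Theta[OF U]])
  moreover have "(\<lambda>h. grad (s *\<^sub>R z + a) \<bullet> (h *\<^sub>R z)) = (*) (grad (s *\<^sub>R z + a) \<bullet> z)"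
    by (simp add: fun_eq_iff mult.commute)
  ultimately show ?thesis by (simp add: has_field_derivative_def)
qed

lemma has_real_derivative_integral_Theta_translated:
  assumes A: "A \<subseteq> C" "closed A" and z: "z \<in> C - {0}" and t: "t > 0"
  shows "((\<lambda>s. integral A (\<lambda>a. \<Theta> (s *\<^sub>R z + a))) has_real_derivative
           integral A (\<lambda>a. grad (t *\<^sub>R z + a) \<bullet> z)) (at t)"
proof -
  obtain M where M: "M \<ge> 0" "\<And>x. x \<in> C - {0} \<Longrightarrow> norm (grad x) \<le> M * norm x powr (- q - 1)"
    using grad_bound by blast
  obtain \<kappa> where \<kappa>: "\<kappa> > 0" "\<And>x y. x \<in> C \<Longrightarrow> y \<in> C \<Longrightarrow> \<kappa> * (norm x + norm y) \<le> norm (x + y)"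
    using pointed_cone_norm_add_ge[OF pointed] by blast
  define g where "g = (\<lambda>a::'a. M * norm z * (\<kappa> * (t / 2 * norm z + norm a)) powr (- q - 1))"
  \<comment> \<open>For s > t/2 the points s z + a stay uniformly away from the origin.\<close>
  have dominated: "\<bar>grad (s *\<^sub>R z + a) \<bullet> z\<bar> \<le> g a" if s: "s \<in> {t/2<..<2*t}" and a: "a \<in> A" for s a
  proof -
    have s0: "s > 0" using s t by simp
    have x: "s *\<^sub>R z + a \<in> C - {0}"
      using translated_cone_subset[OF scaleR_punctured_cone[OF z s0]] a A(1) by blast
    have "0 < \<kappa> * (t / 2 * norm z + norm a)"
      using \<kappa>(1) t z by (simp add: add_pos_nonneg)
    moreover have "\<kappa> * (t / 2 * norm z + norm a) \<le> \<kappa> * (s * norm z + norm a)"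
      using \<kappa>(1) s by (intro mult_left_mono add_right_mono mult_right_mono) auto
    moreover have "\<dots> \<le> norm (s *\<^sub>R z + a)"
      using \<kappa>(2)[of "s *\<^sub>R z" a] scaleR_punctured_cone[OF z s0] a A(1) s0 by auto
    ultimately have powr_le: "norm (s *\<^sub>R z + a) powr (- q - 1) \<le> (\<kappa> * (t / 2 * norm z + norm a)) powr (- q - 1)"
      using q_gt_dim by (intro powr_mono2') auto
    have "\<bar>grad (s *\<^sub>R z + a) \<bullet> z\<bar> \<le> norm (grad (s *\<^sub>R z + a)) * norm z"
      by (rule Cauchy_Schwarz_ineq2)
    also have "\<dots> \<le> M * norm (s *\<^sub>R z + a) powr (- q - 1) * norm z"
      using M(2)[OF x] by (rule mult_right_mono) simp
    also have "\<dots> \<le> M * (\<kappa> * (t / 2 * norm z + norm a)) powr (- q - 1) * norm z"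
      using powr_le M(1) by (intro mult_right_mono mult_left_mono) auto
    also have "\<dots> = g a" by (simp add: g_def mult_ac)
    finally show ?thesis .
  qed
  have g_int: "g integrable_on A"
  proof -
    have exponent: "- (q + 1) = - q - 1" by simp
    have "integrable lborel (\<lambda>a::'a. (t / 2 * norm z + norm a) powr (- q - 1))"
      using integrable_shifted_norm_powr[where 'a = 'a, of "q + 1" "t / 2 * norm z", unfolded exponent]
        q_gt_dim t z by simp
    then have "integrable lborel (\<lambda>a::'a. (M * norm z * \<kappa> powr (- q - 1)) * (t / 2 * norm z + norm a) powr (- q - 1))"
      by simp
    moreover have "g = (\<lambda>a. (M * norm z * \<kappa> powr (- q - 1)) * (t / 2 * norm z + norm a) powr (- q - 1))"
      using \<kappa>(1) t by (simp add: g_def fun_eq_iff powr_mult mult_ac)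
    ultimately have "set_integrable lborel A g"
      unfolding set_integrable_def using A(2) by (intro integrable_mult_indicator) auto
    then show ?thesis by (rule set_borel_integral_eq_integral(1))
  qed
  show ?thesis
  proof (rule has_real_derivative_integral_dominated[where a = "t / 2" and b = "2 * t" and g = g])
    show "t \<in> {t / 2<..<2 * t}" using t by simp
    show "(\<lambda>a. \<Theta> (s *\<^sub>R z + a)) integrable_on A" if "s \<in> {t / 2<..<2 * t}" for s
      using that t by (intro integral_translated_Theta(1)[OF scaleR_punctured_cone[OF z] A]) auto
    show "((\<lambda>s. \<Theta> (s *\<^sub>R z + a)) has_real_derivative grad (s *\<^sub>R z + a) \<bullet> z) (at s)"
      if "s \<in> {t / 2<..<2 * t}" "a \<in> A" for s a
      using that t A(1) by (intro Theta_has_real_derivative_along[OF _ z]) auto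
  qed (use dominated g_int in auto)
qed

lemma integral_grad_translated_scaled:
  assumes A: "A \<subseteq> C" "closed A" and z: "z \<in> C - {0}" and t: "t > 0"
  shows "integral A (\<lambda>a. grad (t *\<^sub>R z + a) \<bullet> z)
    = t powr (real DIM('a) - q - 1) * integral ((\<lambda>a. z + (1 / t) *\<^sub>R a) ` A) (\<lambda>x. grad x \<bullet> z)"
proof -
  let ?V = "(\<lambda>a. z + (1 / t) *\<^sub>R a) ` A"
  have "?V = (+) z ` ((*\<^sub>R) (1 / t) ` A)" by (simp add: image_image)
  moreover have "(*\<^sub>R) (1 / t) ` A \<subseteq> C"
    using A(1) cone_C t by (auto simp: cone_def)
  ultimately have "closed ?V" "?V \<subseteq> (+) z ` C"
    using A(2) by (auto intro!: closed_translation closed_scaling)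
  then have "integral ?V (\<lambda>x. grad x \<bullet> z) = (1 / t) ^ DIM('a) * integral A (\<lambda>a. grad (z + (1 / t) *\<^sub>R a) \<bullet> z)"
    using t by (subst set_integrable_affine_image(2)[OF _ set_integrable_grad_inner[OF z]]) auto
  also have "integral A (\<lambda>a. grad (z + (1 / t) *\<^sub>R a) \<bullet> z) = t powr (q + 1) * integral A (\<lambda>a. grad (t *\<^sub>R z + a) \<bullet> z)"
  proof -
    have pointwise: "grad (z + (1 / t) *\<^sub>R a) = t powr (q + 1) *\<^sub>R grad (t *\<^sub>R z + a)" if "a \<in> A" for a
    proof -
      have "t *\<^sub>R z + a \<in> C - {0}"
        using translated_cone_subset[OF scaleR_punctured_cone[OF z t]] that A(1) by auto
      then have "grad ((1 / t) *\<^sub>R (t *\<^sub>R z + a)) = (1 / t) powr (- q - 1) *\<^sub>R grad (t *\<^sub>R z + a)"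
        using t by (intro grad_homogeneous) auto
      moreover have "(1 / t) powr (- q - 1) = t powr (q + 1)"
        using t by (simp add: powr_divide powr_diff powr_add powr_minus field_simps)
      moreover have "(1 / t) *\<^sub>R (t *\<^sub>R z + a) = z + (1 / t) *\<^sub>R a"
        using t by (simp add: scaleR_add_right)
      ultimately show ?thesis by simp
    qed
    have "integral A (\<lambda>a. grad (z + (1 / t) *\<^sub>R a) \<bullet> z)
        = integral A (\<lambda>a. t powr (q + 1) * (grad (t *\<^sub>R z + a) \<bullet> z))"
      by (rule integral_cong) (simp only: pointwise inner_scaleR_left)
    then show ?thesis by simp
  qed
  also have "(1 / t) ^ DIM('a) = t powr (- real DIM('a))"
    using t by (simp add: power_one_over powr_minus_divide powr_realpow)
  finally have "integral ?V (\<lambda>x. grad x \<bullet> z)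
      = t powr (- real DIM('a)) * t powr (q + 1) * integral A (\<lambda>a. grad (t *\<^sub>R z + a) \<bullet> z)"
    by simp
  moreover have "t powr (real DIM('a) - q - 1) * (t powr (- real DIM('a)) * t powr (q + 1)) = 1"
    using t by (simp add: powr_add[symmetric])
  ultimately show ?thesis by (metis mult.assoc mult_1)
qed

lemma T_Theta_has_real_derivative:
  assumes A: "A \<subseteq> C" "closed A" and z: "z \<in> C - {0}" and t: "t > 0"
  shows "((\<lambda>s. T_Theta C \<Theta> A (s *\<^sub>R z)) has_real_derivative
           t powr (real DIM('a) - q - 1) * ((real DIM('a) - q) * chi_conv C \<Theta> z
             - integral ((\<lambda>a. z + (1 / t) *\<^sub>R a) ` A) (\<lambda>x. grad x \<bullet> z))) (at t)"
proof -
  let ?n = "real DIM('a)"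
  have "((\<lambda>s. s powr (?n - q) * chi_conv C \<Theta> z - integral A (\<lambda>a. \<Theta> (s *\<^sub>R z + a))) has_real_derivative
          (?n - q) * t powr (?n - q - 1) * chi_conv C \<Theta> z - integral A (\<lambda>a. grad (t *\<^sub>R z + a) \<bullet> z)) (at t)"
    by (intro DERIV_diff DERIV_cmult_right has_real_derivative_powr[OF t]
        has_real_derivative_integral_Theta_translated[OF A z t])
  then have "((\<lambda>s. T_Theta C \<Theta> A (s *\<^sub>R z)) has_real_derivative
          (?n - q) * t powr (?n - q - 1) * chi_conv C \<Theta> z - integral A (\<lambda>a. grad (t *\<^sub>R z + a) \<bullet> z)) (at t)"
  proof (rule has_field_derivative_transform_within_open[OF _ open_greaterThan])
    show "t \<in> {0<..}" using t by simp
  qed (simp add: T_Theta_scaled_eq[OF A z])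
  then show ?thesis
    unfolding integral_grad_translated_scaled[OF A z t] by (simp add: algebra_simps)
qed

end

theorem lemma5p4:
  fixes C A :: "'a::euclidean_space set" and \<Theta> :: "'a \<Rightarrow> real" and grad\<Theta> :: "'a \<Rightarrow> 'a"
    and q :: real and z :: 'a
  assumes dim: "DIM('a) \<ge> 2"
    and cone: "pointed_cone C"
    and q: "q > real DIM('a)"
    and homog: "\<And>x t. x \<in> C - {0} \<Longrightarrow> t > 0 \<Longrightarrow> \<Theta> (t *\<^sub>R x) = t powr (- q) * \<Theta> x"
    and pos: "\<And>x. x \<in> C - {0} \<Longrightarrow> \<Theta> x > 0"
    and C1: "\<exists>U. open U \<and> C - {0} \<subseteq> U \<and> continuous_on U grad\<Theta> \<and>
               (\<forall>x\<in>U. (\<Theta> has_derivative (\<lambda>h. grad\<Theta> x \<bullet> h)) (at x))"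
    and A: "C_asymptotic C A"
    and z: "z \<in> C - {0}"
  shows "(\<forall>t>0. \<exists>D. ((\<lambda>s. T_Theta C \<Theta> A (s *\<^sub>R z)) has_real_derivative D) (at t) \<and>
            t powr (q + 1 - real DIM('a)) * D =
              (real DIM('a) - q) * chi_conv C \<Theta> z
              - integral ((\<lambda>a. z + (1 / t) *\<^sub>R a) ` A) (\<lambda>x. grad\<Theta> x \<bullet> z))
         \<and> ((\<lambda>s. T_Theta C \<Theta> A (s *\<^sub>R z)) has_real_derivative
              ((real DIM('a) - q) * chi_conv C \<Theta> z
               - integral ((+) z ` A) (\<lambda>x. grad\<Theta> x \<bullet> z))) (at 1)"
proof -
  obtain U where "open U" "C - {0} \<subseteq> U" "continuous_on U grad\<Theta>"
    "\<And>x. x \<in> U \<Longrightarrow> (\<Theta> has_derivative (\<lambda>h. grad\<Theta> x \<bullet> h)) (at x)"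
    using C1 by blast
  then interpret homogeneous_C1_weight C \<Theta> grad\<Theta> q U
    using cone q homog by unfold_locales
  have A_sub: "A \<subseteq> C" "closed A"
    using A unfolding C_asymptotic_def by blast+
  define R where "R t = (real DIM('a) - q) * chi_conv C \<Theta> z
    - integral ((\<lambda>a. z + (1 / t) *\<^sub>R a) ` A) (\<lambda>x. grad\<Theta> x \<bullet> z)" for t
  have deriv: "((\<lambda>s. T_Theta C \<Theta> A (s *\<^sub>R z)) has_real_derivative t powr (real DIM('a) - q - 1) * R t) (at t)"
    if "t > 0" for t
    unfolding R_def by (rule T_Theta_has_real_derivative[OF A_sub z that])
  have "t powr (q + 1 - real DIM('a)) * (t powr (real DIM('a) - q - 1) * R t) = R t" if "t > 0" for t
    using that by (simp add: powr_add[symmetric] mult.assoc[symmetric])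
  then have "\<forall>t>0. \<exists>D. ((\<lambda>s. T_Theta C \<Theta> A (s *\<^sub>R z)) has_real_derivative D) (at t) \<and>
      t powr (q + 1 - real DIM('a)) * D = R t"
    using deriv by blast
  moreover have "((\<lambda>s. T_Theta C \<Theta> A (s *\<^sub>R z)) has_real_derivative R 1) (at 1)"
    using deriv[of 1] by simp
  ultimately show ?thesis unfolding R_def by simp
qed

end
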